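(* Let $k\subset K$ be differential fields of characteristic zero with the same field of constants $C$, assumed algebraically closed, and assume there is $x\in k$ with $x'=1$. Let $f,g\in K$ be iterated integrals over $k$. If $f$ and $g$ are algebraically dependent over $k$, then there exist $u,v\in k$, not both zero, such that $uf+vg\in k$.
   Context: An element $f\in K$ is an iterated integral over $k$ if $f^{(m)}\in k$ for some $m\in\mathbb{N}$. Here $k$ need not be algebraically closed. *)

theory Defs
  imports "HOL-Computational_Algebra.Polynomial"
begin

text \<open>A derivation on a field (the ambient differential field K is the whole type).\<close>
definition derivation :: "('a::field \<Rightarrow> 'a) \<Rightarrow> bool" where
  "derivation D \<longleftrightarrow> (\<forall>a b. D (a + b) = D a + D b) \<and> (\<forall>a b. D (a * b) = D a * b + a * D b)"

definition diff_subfield :: "('a::field \<Rightarrow> 'a) \<Rightarrow> 'a set \<Rightarrow> bool" where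
  "diff_subfield D k \<longleftrightarrow> 0 \<in> k \<and> 1 \<in> k \<and>
     (\<forall>a\<in>k. \<forall>b\<in>k. a + b \<in> k \<and> a * b \<in> k) \<and>
     (\<forall>a\<in>k. - a \<in> k \<and> inverse a \<in> k) \<and> (\<forall>a\<in>k. D a \<in> k)"

definition constants :: "('a \<Rightarrow> 'a::field) \<Rightarrow> 'a set" where
  "constants D = {c. D c = 0}"

definition alg_closed_set :: "'a::field set \<Rightarrow> bool" where
  "alg_closed_set C \<longleftrightarrow> (\<forall>p::'a poly. degree p > 0 \<and> (\<forall>i. coeff p i \<in> C) \<longrightarrow> (\<exists>c\<in>C. poly p c = 0))"

definition iterated_integral :: "('a \<Rightarrow> 'a) \<Rightarrow> 'a set \<Rightarrow> 'a \<Rightarrow> bool" where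
  "iterated_integral D k f \<longleftrightarrow> (\<exists>m::nat. (D ^^ m) f \<in> k)"

text \<open>P is encoded as a polynomial in X whose
  coefficients are polynomials in Y.\<close>
definition alg_dependent :: "'a::comm_ring_1 set \<Rightarrow> 'a \<Rightarrow> 'a \<Rightarrow> bool" where
  "alg_dependent k f g \<longleftrightarrow> (\<exists>P :: 'a poly poly. P \<noteq> 0 \<and> (\<forall>i j. coeff (coeff P i) j \<in> k) \<and>
      poly (map_poly (\<lambda>q. poly q g) P) f = 0)"

end

theory Submission
  imports Defs
begin

text \<open>Let \<open>L\<close> contain all constants and an \<open>x\<close> with \<open>x' = 1\<close>. If \<open>y\<close> is algebraic over \<open>L\<close>
  and \<open>y' \<in> L\<close>, applying the derivation to the monic minimal polynomial \<open>q\<close> of \<open>y\<close> shows that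
  \<open>y + q\<^sub>n\<^sub>-\<^sub>1/n\<close> is a constant, so \<open>y \<in> L\<close>. Hence a primitive \<open>t \<notin> L\<close> is transcendental, an
  iterated integral lying in \<open>L(t)\<close> is a polynomial in \<open>t\<close>, and in fact has the form \<open>c t + l\<close>
  with \<open>c\<close> a polynomial in \<open>x\<close> with constant coefficients; by induction on the order, an
  iterated integral algebraic over \<open>L\<close> lies in \<open>L\<close>.

  If \<open>f \<notin> k\<close>, adjoining the derivatives of \<open>f\<close> one by one gives \<open>f \<in> N(s) - N\<close> for a
  primitive \<open>s\<close> over some \<open>N \<supseteq> k\<close>. Then \<open>f = c s + l\<close>, and \<open>g\<close>, being algebraic over \<open>N(s)\<close>,
  is \<open>c' s + l'\<close>, with \<open>c, c' \<in> k\<close>. As \<open>s\<close> is transcendental over \<open>N\<close>, the relation \<open>P(f, g) = 0\<close>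
  holds along the whole line \<open>z \<mapsto> (l + c z, l' + c' z)\<close>; specialising at an integer point
  shows that \<open>c' f - c g = c' l - c l'\<close> is algebraic over \<open>k\<close>, and being an iterated integral it
  lies in \<open>k\<close>.\<close>

definition poly_over :: "'a::comm_ring_1 set \<Rightarrow> 'a poly \<Rightarrow> bool" where
  "poly_over L p \<longleftrightarrow> (\<forall>i. coeff p i \<in> L)"

definition algebraic_over :: "'a::comm_ring_1 set \<Rightarrow> 'a \<Rightarrow> bool" where
  "algebraic_over L y \<longleftrightarrow> (\<exists>p. p \<noteq> 0 \<and> poly_over L p \<and> poly p y = 0)"

definition adjoin :: "'a::field set \<Rightarrow> 'a \<Rightarrow> 'a set" where
  "adjoin L s = {poly p s / poly q s | p q. poly_over L p \<and> poly_over L q \<and> poly q s \<noteq> 0}"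

text \<open>The derivation of \<open>L[T]\<close> that extends \<open>D\<close> on the coefficients and sends \<open>T\<close> to \<open>a\<close>.\<close>
definition poly_der :: "('a::idom \<Rightarrow> 'a) \<Rightarrow> 'a \<Rightarrow> 'a poly \<Rightarrow> 'a poly" where
  "poly_der D a p = map_poly D p + smult a (pderiv p)"

definition poly2 :: "'a::comm_ring_1 poly poly \<Rightarrow> 'a \<Rightarrow> 'a \<Rightarrow> 'a" where
  "poly2 P a b = poly (map_poly (\<lambda>q. poly q b) P) a"

lemma poly_over_pCons_iff: "poly_over L (pCons c p) \<longleftrightarrow> c \<in> L \<and> poly_over L p"
  by (auto simp: poly_over_def coeff_pCons split: nat.splits)

lemma poly_over_mono: "L \<subseteq> L' \<Longrightarrow> poly_over L p \<Longrightarrow> poly_over L' p"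
  unfolding poly_over_def by blast

lemma algebraic_over_mono: "L \<subseteq> L' \<Longrightarrow> algebraic_over L y \<Longrightarrow> algebraic_over L' y"
  unfolding algebraic_over_def using poly_over_mono by blast

lemma monic_degree_0: "lead_coeff q = 1 \<Longrightarrow> degree q = 0 \<Longrightarrow> q = 1"
  by (elim degree_eq_zeroE) (simp add: one_pCons)

lemma poly_linear: "degree p \<le> 1 \<Longrightarrow> poly p (t::'a::comm_ring_1) = coeff p 0 + coeff p 1 * t"
  by (cases "degree p") (auto simp: poly_altdef coeff_eq_0 atMost_Suc)

lemma alg_dependent_iff:
  "alg_dependent K f g \<longleftrightarrow> (\<exists>P. P \<noteq> 0 \<and> (\<forall>i. poly_over K (coeff P i)) \<and> poly2 P f g = 0)"
  by (simp add: alg_dependent_def poly_over_def poly2_def)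

lemma poly_poly_const: "poly (poly P [:a:]) b = poly2 P a b"
  by (induction P rule: pCons_induct) (simp_all add: poly2_def map_poly_pCons)

lemma poly_poly_pcompose:
  "poly (poly (map_poly (\<lambda>q. pcompose q B) P) A) z = poly2 P (poly A z) (poly B z)"
  by (induction P rule: pCons_induct) (simp_all add: poly2_def map_poly_pCons poly_pcompose)

lemma coeff_poly_const: "coeff (poly P [:a:]) j = poly (map_poly (\<lambda>q. coeff q j) P) a"
  by (induction P rule: pCons_induct) (simp_all add: map_poly_pCons)

lemma poly_poly_const_nonzero_outside_roots:
  fixes P :: "'a::comm_ring_1 poly poly"
  assumes "P \<noteq> 0" "\<And>i. poly_over L (coeff P i)"
  obtains X where "X \<noteq> 0" "poly_over L X" "\<And>a. poly X a \<noteq> 0 \<Longrightarrow> poly P [:a:] \<noteq> 0"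
proof -
  obtain i where "coeff P i \<noteq> 0" using assms(1) by (metis leading_coeff_0_iff)
  then obtain j where ij: "coeff (coeff P i) j \<noteq> 0" by (metis leading_coeff_0_iff)
  define X where "X = map_poly (\<lambda>q. coeff q j) P"
  have coeff_X: "coeff X i' = coeff (coeff P i') j" for i'
    by (simp add: X_def coeff_map_poly)
  show ?thesis
  proof
    show "X \<noteq> 0" using ij coeff_X by (metis coeff_0)
    show "poly_over L X" using assms(2) coeff_X by (simp add: poly_over_def)
    show "poly P [:a:] \<noteq> 0" if "poly X a \<noteq> 0" for a
      using that coeff_poly_const[of P a j] by (metis X_def coeff_0)
  qed
qed

locale diff_field =
  fixes D :: "'a::field_char_0 \<Rightarrow> 'a"
  assumes derivation: "derivation D"
begin

lemma D_add: "D (a + b) = D a + D b"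
  and D_mult: "D (a * b) = D a * b + a * D b"
  using derivation by (simp_all add: derivation_def)

lemma D_0 [simp]: "D 0 = 0"
  using D_add[of 0 0] by simp

lemma D_1 [simp]: "D 1 = 0"
  using D_mult[of 1 1] by simp

lemma D_uminus: "D (- a) = - D a"
  using D_add[of a "- a"] by (simp add: add_eq_0_iff)

lemma D_diff: "D (a - b) = D a - D b"
  using D_add[of a "- b"] by (simp add: D_uminus)

lemma D_of_nat [simp]: "D (of_nat n) = 0"
  by (induction n) (simp_all add: D_add)

lemma D_sum: "D (sum f A) = (\<Sum>i\<in>A. D (f i))"
  by (induction A rule: infinite_finite_induct) (simp_all add: D_add)

lemma D_power: "D (a ^ Suc n) = of_nat (Suc n) * a ^ n * D a"
  by (induction n) (simp_all add: D_mult algebra_simps)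

lemma D_divide: "b \<noteq> 0 \<Longrightarrow> D (a / b) = (D a * b - a * D b) / b\<^sup>2"
  using D_mult[of "a / b" b] by (simp add: field_simps power2_eq_square)

lemma D_divide_of_nat: "D (a / of_nat n) = D a / of_nat n"
  by (cases "n = 0") (simp_all add: D_divide power2_eq_square)

lemma D_funpow_add: "(D ^^ n) (a + b) = (D ^^ n) a + (D ^^ n) b"
  by (induction n) (simp_all add: D_add)

lemma D_funpow_diff: "(D ^^ n) (a - b) = (D ^^ n) a - (D ^^ n) b"
  by (induction n) (simp_all add: D_diff)

lemma D_poly: "D (poly p t) = poly (poly_der D (D t) p) t"
  by (induction p rule: pCons_induct)
     (simp_all add: poly_der_def map_poly_pCons pderiv_pCons D_add D_mult algebra_simps)

lemma D_funpow_poly: "(D ^^ j) (poly p t) = poly ((poly_der D (D t) ^^ j) p) t"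
  by (induction j) (simp_all add: D_poly)

lemma coeff_poly_der: "coeff (poly_der D a q) i = D (coeff q i) + a * coeff (pderiv q) i"
  by (simp add: poly_der_def coeff_map_poly)

lemma pderiv_poly_der: "pderiv (poly_der D a p) = poly_der D a (pderiv p)"
proof -
  have "pderiv (map_poly D p) = map_poly D (pderiv p)"
    by (rule poly_eqI) (simp add: coeff_pderiv coeff_map_poly D_mult del: of_nat_Suc)
  then show ?thesis
    by (simp add: poly_der_def pderiv_add pderiv_smult)
qed

lemma pderiv_funpow_poly_der: "pderiv ((poly_der D a ^^ j) p) = (poly_der D a ^^ j) (pderiv p)"
  by (induction j) (simp_all add: pderiv_poly_der)

lemma degree_poly_der_monic:
  assumes "lead_coeff q = 1" "degree q \<ge> 1"
  shows "degree (poly_der D a q) < degree q"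
proof -
  have "coeff (poly_der D a q) i = 0" if "i \<ge> degree q" for i
  proof -
    have "coeff q i = (if i = degree q then 1 else 0)"
      using assms(1) that by (auto simp: coeff_eq_0)
    moreover have "coeff (pderiv q) i = 0"
      using that by (simp add: coeff_pderiv coeff_eq_0)
    ultimately show ?thesis by (simp add: coeff_poly_der)
  qed
  then have "degree (poly_der D a q) \<le> degree q - 1"
    using assms(2) by (intro degree_le) auto
  then show ?thesis using assms(2) by simp
qed

lemma poly_der_monic_zero:
  assumes "lead_coeff q = 1" "degree q \<ge> 1" "poly_der D (D t) q = 0"
  shows "D (t + coeff q (degree q - 1) / of_nat (degree q)) = 0"
proof -
  define n where "n = degree q"
  have n: "Suc (n - 1) = n" "of_nat n \<noteq> (0::'a)" using assms(2) by (auto simp: n_def)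
  have "coeff (poly_der D (D t) q) (n - 1) = 0" using assms(3) by simp
  then have "D (coeff q (n - 1)) = - D t * of_nat n"
    using assms(1) n by (simp add: coeff_poly_der coeff_pderiv n_def add_eq_0_iff del: of_nat_Suc)
  then show ?thesis using n by (simp add: D_add D_divide_of_nat n_def[symmetric])
qed

lemma funpow_zero_poly_in_x:
  assumes Dx: "D x = 1"
  shows "(D ^^ M) c = 0 \<Longrightarrow> \<exists>cs. (\<forall>i. D (cs i) = 0) \<and> c = (\<Sum>i<M. cs i * x ^ i)"
proof (induction M arbitrary: c)
  case 0
  then show ?case by (intro exI[of _ "\<lambda>_. 0"]) simp
next
  case (Suc M)
  have "(D ^^ M) (D c) = 0" using Suc.prems by (simp add: funpow_Suc_right del: funpow.simps)
  then obtain cs where cs: "\<forall>i. D (cs i) = 0" "D c = (\<Sum>i<M. cs i * x ^ i)"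
    using Suc.IH by blast
  define cs' where "cs' i = (if i = 0 then c - (\<Sum>i<M. cs i / of_nat (Suc i) * x ^ Suc i)
    else cs (i - 1) / of_nat i)" for i
  have "D (cs i / of_nat (Suc i) * x ^ Suc i) = cs i * x ^ i" for i
    using cs(1) by (simp add: D_mult D_power D_divide_of_nat Dx del: of_nat_Suc power_Suc)
  then have "D (cs' 0) = 0"
    by (simp add: cs'_def D_diff D_sum cs(2))
  then have "\<forall>i. D (cs' i) = 0" using cs(1) by (simp add: cs'_def D_divide_of_nat)
  moreover have "c = (\<Sum>i<Suc M. cs' i * x ^ i)"
    unfolding sum.lessThan_Suc_shift by (simp add: cs'_def)
  ultimately show ?case by blast
qed

end

locale differential_subfield = diff_field +
  fixes L
  assumes subfield: "diff_subfield D L"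
begin

lemma zero_mem: "0 \<in> L"
  and one_mem: "1 \<in> L"
  and add_mem: "a \<in> L \<Longrightarrow> b \<in> L \<Longrightarrow> a + b \<in> L"
  and mult_mem: "a \<in> L \<Longrightarrow> b \<in> L \<Longrightarrow> a * b \<in> L"
  and uminus_mem: "a \<in> L \<Longrightarrow> - a \<in> L"
  and inverse_mem: "a \<in> L \<Longrightarrow> inverse a \<in> L"
  and D_mem: "a \<in> L \<Longrightarrow> D a \<in> L"
  using subfield by (simp_all add: diff_subfield_def)

lemma diff_mem: "a \<in> L \<Longrightarrow> b \<in> L \<Longrightarrow> a - b \<in> L"
  using add_mem uminus_mem by (metis diff_conv_add_uminus)

lemma divide_mem: "a \<in> L \<Longrightarrow> b \<in> L \<Longrightarrow> a / b \<in> L"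
  using mult_mem inverse_mem by (simp add: divide_inverse)

lemma of_nat_mem: "of_nat n \<in> L"
  by (induction n) (simp_all add: zero_mem one_mem add_mem)

lemma power_mem: "a \<in> L \<Longrightarrow> a ^ n \<in> L"
  by (induction n) (simp_all add: one_mem mult_mem)

lemma sum_mem: "(\<And>i. i \<in> A \<Longrightarrow> f i \<in> L) \<Longrightarrow> sum f A \<in> L"
  by (induction A rule: infinite_finite_induct) (simp_all add: zero_mem add_mem)

lemma D_funpow_mem: "a \<in> L \<Longrightarrow> (D ^^ n) a \<in> L"
  by (induction n) (simp_all add: D_mem)

lemma poly_over_0: "poly_over L 0"
  and poly_over_const: "c \<in> L \<Longrightarrow> poly_over L [:c:]"
  by (simp_all add: poly_over_def coeff_pCons zero_mem split: nat.splits)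

lemma poly_over_1: "poly_over L 1"
  using poly_over_const[OF one_mem] by (simp add: one_pCons)

lemma poly_over_linear: "c \<in> L \<Longrightarrow> d \<in> L \<Longrightarrow> poly_over L [:c, d:]"
  by (simp add: poly_over_pCons_iff poly_over_const poly_over_0)

lemma poly_over_add: "poly_over L p \<Longrightarrow> poly_over L q \<Longrightarrow> poly_over L (p + q)"
  and poly_over_uminus: "poly_over L p \<Longrightarrow> poly_over L (- p)"
  and poly_over_diff: "poly_over L p \<Longrightarrow> poly_over L q \<Longrightarrow> poly_over L (p - q)"
  and poly_over_smult: "c \<in> L \<Longrightarrow> poly_over L p \<Longrightarrow> poly_over L (smult c p)"
  and poly_over_map_D: "poly_over L p \<Longrightarrow> poly_over L (map_poly D p)"
  and poly_over_pderiv: "poly_over L p \<Longrightarrow> poly_over L (pderiv p)"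
  by (simp_all add: poly_over_def add_mem uminus_mem diff_mem mult_mem D_mem of_nat_mem coeff_map_poly
      coeff_pderiv del: of_nat_Suc)

lemma poly_over_mult: "poly_over L p \<Longrightarrow> poly_over L q \<Longrightarrow> poly_over L (p * q)"
  unfolding poly_over_def coeff_mult by (auto intro!: sum_mem mult_mem)

lemma poly_over_power: "poly_over L p \<Longrightarrow> poly_over L (p ^ n)"
  by (induction n) (simp_all add: poly_over_1 poly_over_mult)

lemma poly_over_pcompose: "poly_over L p \<Longrightarrow> poly_over L q \<Longrightarrow> poly_over L (pcompose p q)"
  by (induction p rule: pCons_induct)
     (auto simp: pcompose_pCons poly_over_pCons_iff intro!: poly_over_add poly_over_mult poly_over_const)

lemma poly_over_poly_der: "a \<in> L \<Longrightarrow> poly_over L p \<Longrightarrow> poly_over L (poly_der D a p)"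
  unfolding poly_der_def by (intro poly_over_add poly_over_map_D poly_over_smult poly_over_pderiv)

lemma poly_over_funpow_poly_der: "a \<in> L \<Longrightarrow> poly_over L p \<Longrightarrow> poly_over L ((poly_der D a ^^ j) p)"
  by (induction j) (simp_all add: poly_over_poly_der)

lemma poly_over_poly_poly:
  assumes "\<And>i. poly_over L (coeff P i)" "poly_over L A"
  shows "poly_over L (poly P A)"
  using assms
proof (induction P rule: pCons_induct)
  case (pCons a P)
  have "poly_over L a" "\<And>i. poly_over L (coeff P i)"
    using pCons.prems(1)[of 0] pCons.prems(1)[of "Suc _"] by simp_all
  with pCons show ?case by (auto intro!: poly_over_add poly_over_mult)
qed (simp add: poly_over_0)

lemma algebraic_over_affine:
  assumes "algebraic_over L y" "a \<in> L" "b \<in> L" "b \<noteq> 0"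
  shows "algebraic_over L (a + b * y)"
proof -
  obtain p where p: "p \<noteq> 0" "poly_over L p" "poly p y = 0"
    using assms(1) by (auto simp: algebraic_over_def)
  define q where "q = [:- a / b, 1 / b:]"
  have "poly_over L q"
    unfolding q_def using assms by (intro poly_over_linear divide_mem uminus_mem one_mem)
  moreover have "degree q > 0" using assms(4) by (simp add: q_def)
  moreover have "poly (pcompose p q) (a + b * y) = 0"
    using p(3) assms(4) by (simp add: poly_pcompose q_def field_simps)
  ultimately show ?thesis
    using p unfolding algebraic_over_def by (metis pcompose_eq_0 poly_over_pcompose)
qed

lemma funpow_mem_mono:
  assumes "(D ^^ a) z \<in> L" "a \<le> b"
  shows "(D ^^ b) z \<in> L"
proof -
  have "(D ^^ b) z = (D ^^ (b - a)) ((D ^^ a) z)"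
    using assms(2) funpow_add[of "b - a" a D] by simp
  then show ?thesis using D_funpow_mem[OF assms(1)] by simp
qed

lemma iterated_integral_add: "iterated_integral D L u \<Longrightarrow> iterated_integral D L v \<Longrightarrow> iterated_integral D L (u + v)"
  and iterated_integral_diff: "iterated_integral D L u \<Longrightarrow> iterated_integral D L v \<Longrightarrow> iterated_integral D L (u - v)"
proof -
  assume "iterated_integral D L u" "iterated_integral D L v"
  then obtain m n where "(D ^^ m) u \<in> L" "(D ^^ n) v \<in> L"
    by (auto simp: iterated_integral_def)
  then have "(D ^^ max m n) u \<in> L" "(D ^^ max m n) v \<in> L"
    by (auto intro: funpow_mem_mono)
  then show "iterated_integral D L (u + v)" "iterated_integral D L (u - v)"
    unfolding iterated_integral_def D_funpow_add D_funpow_diff by (auto intro: add_mem diff_mem)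
qed

lemma adjoinI: "poly_over L p \<Longrightarrow> poly_over L q \<Longrightarrow> poly q s \<noteq> 0 \<Longrightarrow> poly p s / poly q s \<in> adjoin L s"
  unfolding adjoin_def by blast

lemma adjoinE:
  assumes "a \<in> adjoin L s"
  obtains p q where "poly_over L p" "poly_over L q" "poly q s \<noteq> 0" "a = poly p s / poly q s"
  using assms unfolding adjoin_def by blast

lemma poly_mem_adjoin: "poly_over L p \<Longrightarrow> poly p s \<in> adjoin L s"
  using adjoinI[of p 1 s] by (simp add: poly_over_1)

lemma subset_adjoin: "L \<subseteq> adjoin L s"
  using poly_mem_adjoin[OF poly_over_const] by fastforce

lemma self_mem_adjoin: "s \<in> adjoin L s"
  using poly_mem_adjoin[OF poly_over_linear[OF zero_mem one_mem]] by simp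

lemma adjoin_add_mult:
  assumes "a \<in> adjoin L s" "b \<in> adjoin L s"
  shows "a + b \<in> adjoin L s" "a * b \<in> adjoin L s"
proof -
  obtain p1 q1 where 1: "poly_over L p1" "poly_over L q1" "poly q1 s \<noteq> 0" "a = poly p1 s / poly q1 s"
    using assms(1) by (rule adjoinE)
  obtain p2 q2 where 2: "poly_over L p2" "poly_over L q2" "poly q2 s \<noteq> 0" "b = poly p2 s / poly q2 s"
    using assms(2) by (rule adjoinE)
  have q: "poly_over L (q1 * q2)" "poly (q1 * q2) s \<noteq> 0"
    using 1 2 by (simp_all add: poly_over_mult)
  have "a + b = poly (p1 * q2 + p2 * q1) s / poly (q1 * q2) s"
    unfolding 1(4) 2(4) using 1(3) 2(3) by (simp add: field_simps)
  then show "a + b \<in> adjoin L s"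
    using 1 2 q by (metis adjoinI poly_over_add poly_over_mult)
  have "a * b = poly (p1 * p2) s / poly (q1 * q2) s"
    using 1 2 by simp
  then show "a * b \<in> adjoin L s"
    using 1 2 q by (metis adjoinI poly_over_mult)
qed

lemma adjoin_uminus_inverse:
  assumes "a \<in> adjoin L s"
  shows "- a \<in> adjoin L s" "inverse a \<in> adjoin L s"
proof -
  obtain p q where pq: "poly_over L p" "poly_over L q" "poly q s \<noteq> 0" "a = poly p s / poly q s"
    using assms by (rule adjoinE)
  have "- a = poly (- p) s / poly q s" using pq(4) by simp
  then show "- a \<in> adjoin L s" using pq by (metis adjoinI poly_over_uminus)
  show "inverse a \<in> adjoin L s"
  proof (cases "poly p s = 0")
    case True
    then show ?thesis using pq(4) subset_adjoin zero_mem by auto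
  next
    case False
    then have "inverse a = poly q s / poly p s" using pq(4) by simp
    then show ?thesis using pq False by (metis adjoinI)
  qed
qed

lemma adjoin_D:
  assumes "D s \<in> L" "a \<in> adjoin L s"
  shows "D a \<in> adjoin L s"
proof -
  obtain p q where pq: "poly_over L p" "poly_over L q" "poly q s \<noteq> 0" "a = poly p s / poly q s"
    using assms(2) by (rule adjoinE)
  let ?d = "poly_der D (D s)"
  have "D a = poly (?d p * q - p * ?d q) s / poly (q\<^sup>2) s"
    unfolding pq(4) D_divide[OF pq(3)] D_poly by simp
  moreover have "poly_over L (?d p * q - p * ?d q)" "poly_over L (q\<^sup>2)" "poly (q\<^sup>2) s \<noteq> 0"
    using pq(1-3) assms(1)
    by (simp_all add: poly_over_diff poly_over_mult poly_over_poly_der poly_over_power)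
  ultimately show ?thesis by (metis adjoinI)
qed

lemma diff_subfield_adjoin: "D s \<in> L \<Longrightarrow> diff_subfield D (adjoin L s)"
  unfolding diff_subfield_def
  using subset_adjoin zero_mem one_mem
  by (intro conjI ballI adjoin_add_mult adjoin_uminus_inverse adjoin_D) auto

lemma alg_dependent_algebraic_over:
  assumes "alg_dependent K f g" "K \<subseteq> L" "\<not> algebraic_over K f" "f \<in> L"
  shows "algebraic_over L g"
proof -
  obtain P where P: "P \<noteq> 0" "\<And>i. poly_over K (coeff P i)" "poly2 P f g = 0"
    using assms(1) by (auto simp: alg_dependent_iff)
  obtain X where X: "X \<noteq> 0" "poly_over K X" "\<And>a. poly X a \<noteq> 0 \<Longrightarrow> poly P [:a:] \<noteq> 0"
    using poly_poly_const_nonzero_outside_roots[OF P(1,2)] by blast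
  have "poly P [:f:] \<noteq> 0"
    using X assms(3) unfolding algebraic_over_def by blast
  moreover have "poly_over L (poly P [:f:])"
    using P(2) assms(2,4) by (intro poly_over_poly_poly poly_over_const) (auto intro: poly_over_mono)
  moreover have "poly (poly P [:f:]) g = 0"
    using P(3) by (simp add: poly_poly_const)
  ultimately show ?thesis unfolding algebraic_over_def by blast
qed

lemma algebraic_over_vanishing_line:
  assumes "P \<noteq> 0" "\<And>i. poly_over L (coeff P i)" "c \<in> L" "c \<noteq> 0" "c' \<in> L"
    and line: "\<And>z. poly2 P (l + c * z) (l' + c' * z) = 0"
  shows "algebraic_over L (c' * l - c * l')"
proof -
  obtain X where X: "X \<noteq> 0" "poly_over L X" "\<And>a. poly X a \<noteq> 0 \<Longrightarrow> poly P [:a:] \<noteq> 0"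
    using poly_poly_const_nonzero_outside_roots[OF assms(1,2)] by blast
  obtain w where w: "w \<in> \<nat>" "poly X w \<noteq> 0"
    using Nats_infinite poly_roots_finite[OF X(1)]
    by (metis (mono_tags) finite_subset mem_Collect_eq subsetI)
  have "w \<in> L" using w(1) of_nat_mem by (auto elim: Nats_cases)
  define y where "y = l' + c' * ((w - l) / c)"
  have "poly (poly P [:w:]) y = 0"
    using line[of "(w - l) / c"] assms(4) by (simp add: poly_poly_const y_def)
  moreover have "poly_over L (poly P [:w:])"
    using assms(2) \<open>w \<in> L\<close> by (intro poly_over_poly_poly poly_over_const)
  ultimately have "algebraic_over L y"
    using X(3)[OF w(2)] unfolding algebraic_over_def by blast
  then have "algebraic_over L (c' * w + (- c) * y)"
    using assms(3-5) \<open>w \<in> L\<close> by (intro algebraic_over_affine mult_mem uminus_mem) auto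
  moreover have "c' * w + (- c) * y = c' * l - c * l'"
    using assms(4) by (simp add: y_def field_simps)
  ultimately show ?thesis by simp
qed

end

locale same_constants_subfield = differential_subfield +
  assumes constants_subset: "constants D \<subseteq> L"
begin

lemma same_constants_subfield_adjoin: "D s \<in> L \<Longrightarrow> same_constants_subfield D (adjoin L s)"
  using diff_subfield_adjoin subset_adjoin constants_subset
  by unfold_locales auto

lemma monic_poly_der_zero_mem:
  assumes "poly_over L q" "lead_coeff q = 1" "degree q \<ge> 1" "poly_der D (D t) q = 0"
  shows "t \<in> L"
proof -
  define c where "c = coeff q (degree q - 1) / of_nat (degree q)"
  have "t + c \<in> L"
    using poly_der_monic_zero[OF assms(2-4)] constants_subset by (auto simp: constants_def c_def)
  moreover have "c \<in> L"
    using assms(1) by (auto simp: c_def poly_over_def intro: divide_mem of_nat_mem)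
  ultimately show ?thesis
    using diff_mem by fastforce
qed

text \<open>The minimal-degree argument behind both the algebraic and the rational case: the derivation
  lowers the degree of a monic polynomial, so it kills the monic element of least degree.\<close>
lemma poly_der_stable_set_contains_1:
  assumes "q0 \<in> S" "q0 \<noteq> 0"
    and over: "\<And>q. q \<in> S \<Longrightarrow> poly_over L q"
    and smult: "\<And>c q. c \<in> L \<Longrightarrow> q \<in> S \<Longrightarrow> smult c q \<in> S"
    and der: "\<And>q. q \<in> S \<Longrightarrow> poly_der D (D t) q \<in> S"
  shows "t \<in> L \<or> 1 \<in> S"
proof -
  obtain q where q: "q \<in> S" "q \<noteq> 0"
    and min: "\<And>q'. q' \<in> S \<Longrightarrow> q' \<noteq> 0 \<Longrightarrow> degree q \<le> degree q'"
    using ex_has_least_nat[of "\<lambda>q. q \<in> S \<and> q \<noteq> 0" q0 degree] assms(1,2) by blast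
  define r where "r = smult (inverse (lead_coeff q)) q"
  have r: "r \<in> S" "lead_coeff r = 1" "degree r = degree q"
    using q over[OF q(1)] by (auto simp: r_def poly_over_def intro!: smult inverse_mem)
  show ?thesis
  proof (cases "degree r = 0")
    case True
    then show ?thesis using r monic_degree_0 by metis
  next
    case False
    then have "degree (poly_der D (D t) r) < degree q"
      using degree_poly_der_monic r(2,3) by fastforce
    then have "poly_der D (D t) r = 0"
      using min der[OF r(1)] by fastforce
    then show ?thesis
      using monic_poly_der_zero_mem over[OF r(1)] r(2) False by simp
  qed
qed

lemma algebraic_primitive_mem:
  assumes "D y \<in> L" "algebraic_over L y"
  shows "y \<in> L"
proof -
  let ?S = "{q. poly_over L q \<and> poly q y = 0}"
  obtain q0 where "q0 \<in> ?S" "q0 \<noteq> 0"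
    using assms(2) by (auto simp: algebraic_over_def)
  moreover have "poly_der D (D y) q \<in> ?S" if "q \<in> ?S" for q
    using that assms(1) D_poly[of q y] by (auto intro: poly_over_poly_der)
  ultimately have "y \<in> L \<or> 1 \<in> ?S"
    by (intro poly_der_stable_set_contains_1) (auto intro: poly_over_smult)
  then show ?thesis by auto
qed

lemma primitive_poly_eq:
  assumes "t \<notin> L" "D t \<in> L" "poly_over L p" "poly_over L q" "poly p t = poly q t"
  shows "p = q"
proof (rule ccontr)
  assume "p \<noteq> q"
  then have "algebraic_over L t"
    using assms(3-5) unfolding algebraic_over_def by (intro exI[of _ "p - q"]) (simp add: poly_over_diff)
  then show False using algebraic_primitive_mem assms(1,2) by blast
qed

lemma adjoin_primitive_deriv_poly:
  assumes "t \<notin> L" "D t \<in> L" "z \<in> adjoin L t" "poly_over L r" "D z = poly r t"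
  shows "\<exists>p. poly_over L p \<and> z = poly p t"
proof -
  let ?S = "{q. poly_over L q \<and> (\<exists>p. poly_over L p \<and> poly q t * z = poly p t)}"
  obtain p0 q0 where "poly_over L p0" "poly_over L q0" "poly q0 t \<noteq> 0" "z = poly p0 t / poly q0 t"
    using assms(3) by (rule adjoinE)
  then have "q0 \<in> ?S" "q0 \<noteq> 0" by auto
  moreover have "poly_der D (D t) q \<in> ?S" if q: "q \<in> ?S" for q
  proof -
    obtain p where p: "poly_over L p" "poly q t * z = poly p t" using q by blast
    have "D (poly q t * z) = D (poly p t)" using p(2) by simp
    then have "poly (poly_der D (D t) q) t * z = poly (poly_der D (D t) p - q * r) t"
      using assms(5) by (simp add: D_mult D_poly algebra_simps)
    moreover have "poly_over L (poly_der D (D t) p - q * r)" "poly_over L (poly_der D (D t) q)"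
      using q p(1) assms(2,4) by (auto intro: poly_over_diff poly_over_mult poly_over_poly_der)
    ultimately show ?thesis by blast
  qed
  moreover have "smult c q \<in> ?S" if c: "c \<in> L" and q: "q \<in> ?S" for c q
  proof -
    obtain p where "poly_over L p" "poly q t * z = poly p t" using q by blast
    then show ?thesis using c q by (auto simp: mult.assoc intro!: poly_over_smult exI[of _ "smult c p"])
  qed
  ultimately have "1 \<in> ?S"
    using poly_der_stable_set_contains_1[of q0 ?S t] assms(1) by blast
  then show ?thesis by auto
qed

lemma iterated_integral_adjoin_poly:
  assumes "t \<notin> L" "D t \<in> L" "y \<in> adjoin L t" "(D ^^ M) y \<in> L"
  shows "\<exists>p. poly_over L p \<and> y = poly p t"
  using assms(3,4)
proof (induction M arbitrary: y)
  case 0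
  then show ?case by (intro exI[of _ "[:y:]"]) (simp add: poly_over_const)
next
  case (Suc M)
  have "D y \<in> adjoin L t" "(D ^^ M) (D y) \<in> L"
    using Suc.prems adjoin_D assms(2) by (simp_all add: funpow_Suc_right del: funpow.simps)
  then obtain r where "poly_over L r" "D y = poly r t"
    using Suc.IH by blast
  then show ?case
    using adjoin_primitive_deriv_poly assms(1,2) Suc.prems(1) by blast
qed

lemma funpow_zero_mem:
  assumes "x \<in> L" "D x = 1" "(D ^^ M) c = 0"
  shows "c \<in> L"
proof -
  obtain cs where cs: "\<forall>i. D (cs i) = 0" "c = (\<Sum>i<M. cs i * x ^ i)"
    using funpow_zero_poly_in_x assms(2,3) by blast
  have "cs i \<in> L" for i using cs(1) constants_subset by (auto simp: constants_def)
  then show ?thesis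
    unfolding cs(2) using assms(1) by (auto intro!: sum_mem mult_mem power_mem)
qed

lemma iterated_integral_mult:
  assumes x: "x \<in> L" "D x = 1"
  shows "(D ^^ M) y = 0 \<Longrightarrow> (D ^^ n) f \<in> L \<Longrightarrow> iterated_integral D L (y * f)"
proof (induction "M + n" arbitrary: M n y f rule: less_induct)
  case less
  consider "M = 0" | "n = 0" | M' n' where "M = Suc M'" "n = Suc n'"
    by (meson not0_implies_Suc)
  then show ?case
  proof cases
    case 1
    then show ?thesis
      using less.prems zero_mem by (auto simp: iterated_integral_def intro: exI[of _ 0])
  next
    case 2
    then have "y * f \<in> L" using less.prems funpow_zero_mem[OF x] mult_mem by simp
    then show ?thesis unfolding iterated_integral_def by (metis funpow_0)
  next
    case 3
    have "(D ^^ M') (D y) = 0" "(D ^^ n') (D f) \<in> L"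
      using less.prems 3 by (simp_all add: funpow_Suc_right del: funpow.simps)
    then have "iterated_integral D L (D y * f)" "iterated_integral D L (y * D f)"
      using less.hyps[of M' n "D y" f] less.hyps[of M n' y "D f"] less.prems 3 by simp_all
    then have "iterated_integral D L (D (y * f))"
      unfolding D_mult by (rule iterated_integral_add)
    then show ?thesis
      unfolding iterated_integral_def by (metis funpow_Suc_right comp_apply)
  qed
qed

lemma iterated_integral_adjoin_linear:
  assumes x: "x \<in> L" "D x = 1" and t: "t \<notin> L" "D t \<in> L"
    and y: "y \<in> adjoin L t" "(D ^^ M) y \<in> L"
  shows "\<exists>c l. c \<in> L \<and> l \<in> L \<and> y = c * t + l \<and> (D ^^ M) c = 0"
proof -
  obtain p where p: "poly_over L p" "y = poly p t"
    using iterated_integral_adjoin_poly[OF t y] by blast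
  have "(poly_der D (D t) ^^ M) p = [:(D ^^ M) y:]"
    using p D_funpow_poly[of M p t] y(2) t
    by (intro primitive_poly_eq[OF t]) (simp_all add: poly_over_funpow_poly_der poly_over_const)
  define c where "c = poly (pderiv p) t"
  have "(D ^^ M) c = poly (pderiv ((poly_der D (D t) ^^ M) p)) t"
    by (simp add: c_def D_funpow_poly pderiv_funpow_poly_der)
  also have "\<dots> = 0"
    using \<open>(poly_der D (D t) ^^ M) p = _\<close> by (simp add: pderiv_pCons)
  finally have cM: "(D ^^ M) c = 0" .
  then have cL: "c \<in> L" by (rule funpow_zero_mem[OF x])
  have "pderiv p = [:c:]"
    using p(1) cL by (intro primitive_poly_eq[OF t]) (simp_all add: c_def poly_over_pderiv poly_over_const)
  then have "degree p \<le> 1" "coeff p 1 = c"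
    using degree_pderiv[of p] coeff_pderiv[of p 0] by auto
  then have "y = c * t + coeff p 0"
    using poly_linear[of p t] p(2) by simp
  moreover have "coeff p 0 \<in> L" using p(1) by (simp add: poly_over_def)
  ultimately show ?thesis using cL cM by blast
qed

lemma poly2_vanishes_on_line:
  assumes "s \<notin> L" "D s \<in> L" "\<And>i. poly_over L (coeff P i)"
    and "l \<in> L" "c \<in> L" "l' \<in> L" "c' \<in> L"
    and "poly2 P (l + c * s) (l' + c' * s) = 0"
  shows "poly2 P (l + c * z) (l' + c' * z) = 0"
proof -
  define R where "R = poly (map_poly (\<lambda>q. pcompose q [:l', c':]) P) [:l, c:]"
  have R: "poly R z = poly2 P (l + c * z) (l' + c' * z)" for z
    by (simp add: R_def poly_poly_pcompose algebra_simps)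
  have "poly_over L R"
    unfolding R_def using assms(3-7)
    by (intro poly_over_poly_poly) (simp_all add: coeff_map_poly poly_over_pcompose poly_over_linear)
  then have "R = 0"
    using primitive_poly_eq[OF assms(1,2), of R 0] R[of s] assms(8) poly_over_0 by simp
  then show ?thesis using R[of z] by simp
qed

end

context diff_field
begin

lemma algebraic_iterated_integral_mem:
  assumes "same_constants_subfield D L" "x \<in> L" "D x = 1" "(D ^^ n) y \<in> L" "algebraic_over L y"
  shows "y \<in> L"
  using assms
proof (induction n arbitrary: L)
  case (Suc n L)
  interpret same_constants_subfield D L by (fact Suc.prems(1))
  define t where "t = (D ^^ n) y"
  have Dt: "D t \<in> L" using Suc.prems(4) by (simp add: t_def)
  show ?case
  proof (cases "t \<in> L")
    case True
    then show ?thesis using Suc by (simp add: t_def)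
  next
    case False
    have "y \<in> adjoin L t"
    proof (rule Suc.IH[OF same_constants_subfield_adjoin[OF Dt]])
      show "x \<in> adjoin L t" using Suc.prems(2) subset_adjoin by blast
      show "D x = 1" by (fact Suc.prems(3))
      show "(D ^^ n) y \<in> adjoin L t" using self_mem_adjoin by (simp add: t_def)
      show "algebraic_over (adjoin L t) y" using algebraic_over_mono[OF subset_adjoin Suc.prems(5)] .
    qed
    then obtain c l where cl: "c \<in> L" "l \<in> L" "y = c * t + l"
      using iterated_integral_adjoin_linear[OF Suc.prems(2,3) False Dt _ Suc.prems(4)] by blast
    show ?thesis
    proof (cases "c = 0")
      case True
      with cl show ?thesis by simp
    next
      case c: False
      have "algebraic_over L (- l / c + (1 / c) * y)"
        using Suc.prems(5) cl c by (intro algebraic_over_affine divide_mem uminus_mem one_mem) auto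
      moreover have "- l / c + (1 / c) * y = t"
        using cl c by (simp add: field_simps)
      ultimately have "t \<in> L" using algebraic_primitive_mem Dt by simp
      with False show ?thesis by simp
    qed
  qed
qed simp

lemma iterated_integral_in_primitive_extension:
  assumes "same_constants_subfield D L" "(D ^^ m) f \<in> L" "f \<notin> L"
  shows "\<exists>N s. same_constants_subfield D N \<and> L \<subseteq> N \<and> s \<notin> N \<and> D s \<in> N \<and>
    f \<in> adjoin N s \<and> f \<notin> N"
  using assms
proof (induction m arbitrary: L)
  case (Suc m L)
  interpret same_constants_subfield D L by (fact Suc.prems(1))
  define t where "t = (D ^^ m) f"
  have Dt: "D t \<in> L" using Suc.prems(2) by (simp add: t_def)
  show ?case
  proof (cases "t \<in> L")
    case True
    then show ?thesis using Suc.IH[OF Suc.prems(1)] Suc.prems(3) by (simp add: t_def)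
  next
    case t: False
    show ?thesis
    proof (cases "f \<in> adjoin L t")
      case True
      then show ?thesis using t Dt Suc.prems(1,3) by blast
    next
      case False
      have "(D ^^ m) f \<in> adjoin L t" using self_mem_adjoin by (simp add: t_def)
      then show ?thesis
        using Suc.IH[OF same_constants_subfield_adjoin[OF Dt] _ False] subset_adjoin by blast
    qed
  qed
qed simp

lemma iterated_integral_affine_in_primitive:
  assumes "same_constants_subfield D k" "same_constants_subfield D N" "k \<subseteq> N" "x \<in> k" "D x = 1"
    and "s \<notin> N" "D s \<in> N" "y \<in> adjoin N s" "iterated_integral D k y"
  shows "\<exists>c l M. c \<in> k \<and> l \<in> N \<and> y = c * s + l \<and> (D ^^ M) c = 0"
proof -
  interpret k: same_constants_subfield D k by (fact assms(1))
  interpret N: same_constants_subfield D N by (fact assms(2))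
  obtain M where "(D ^^ M) y \<in> N"
    using assms(3,9) by (auto simp: iterated_integral_def)
  then obtain c l where "c \<in> N" "l \<in> N" "y = c * s + l" "(D ^^ M) c = 0"
    using N.iterated_integral_adjoin_linear[OF _ assms(5-8)] assms(3,4) by blast
  then show ?thesis using k.funpow_zero_mem[OF assms(4,5)] by blast
qed

lemma alg_dependent_affine_in_primitive:
  assumes k: "differential_subfield D k"
    and N: "same_constants_subfield D N" "k \<subseteq> N" "s \<notin> N" "D s \<in> N"
    and dep: "alg_dependent k (c * s + l) (c' * s + l')"
    and "c \<in> k" "c \<noteq> 0" "c' \<in> k" "l \<in> N" "l' \<in> N"
  shows "algebraic_over k (c' * l - c * l')"
proof -
  interpret k: differential_subfield D k by (fact k)
  interpret N: same_constants_subfield D N by (fact N(1))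
  obtain P where P: "P \<noteq> 0" "\<And>i. poly_over k (coeff P i)" "poly2 P (c * s + l) (c' * s + l') = 0"
    using dep by (auto simp: alg_dependent_iff)
  have "poly2 P (l + c * z) (l' + c' * z) = 0" for z
  proof (rule N.poly2_vanishes_on_line[OF N(3,4)])
    show "poly_over N (coeff P i)" for i using poly_over_mono[OF N(2) P(2)] .
    show "l \<in> N" "c \<in> N" "l' \<in> N" "c' \<in> N" using assms(7-11) N(2) by auto
    show "poly2 P (l + c * s) (l' + c' * s) = 0" using P(3) by (simp add: algebra_simps)
  qed
  then show ?thesis by (rule k.algebraic_over_vanishing_line[OF P(1,2) assms(7-9)])
qed

lemma dependent_iterated_integrals_linear_relation:
  assumes k: "same_constants_subfield D k" and x: "x \<in> k" "D x = 1"
    and f: "iterated_integral D k f" "f \<notin> k" and g: "iterated_integral D k g"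
    and dep: "alg_dependent k f g"
  shows "\<exists>c\<in>k. \<exists>c'\<in>k. c \<noteq> 0 \<and> c' * f - c * g \<in> k"
proof -
  interpret k: same_constants_subfield D k by (fact k)
  obtain m n where mn: "(D ^^ m) f \<in> k" "(D ^^ n) g \<in> k"
    using f(1) g by (auto simp: iterated_integral_def)
  then obtain N s where N: "same_constants_subfield D N" "k \<subseteq> N" "s \<notin> N" "D s \<in> N"
      "f \<in> adjoin N s" "f \<notin> N"
    using iterated_integral_in_primitive_extension[OF k _ f(2)] by blast
  interpret N: same_constants_subfield D N by (fact N(1))
  interpret Ns: same_constants_subfield D "adjoin N s" by (rule N.same_constants_subfield_adjoin[OF N(4)])
  have k_Ns: "k \<subseteq> adjoin N s" using N(2) N.subset_adjoin by blast
  obtain c l M where f_affine: "c \<in> k" "l \<in> N" "f = c * s + l" "(D ^^ M) c = 0"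
    using iterated_integral_affine_in_primitive[OF k N(1,2) x N(3-5) f(1)] by blast
  have "c \<noteq> 0" using f_affine N(6) by auto
  have "\<not> algebraic_over k f"
    using algebraic_iterated_integral_mem[OF k x mn(1)] f(2) by blast
  then have "algebraic_over (adjoin N s) g"
    using Ns.alg_dependent_algebraic_over[OF dep k_Ns] N(5) by blast
  then have "g \<in> adjoin N s"
    using algebraic_iterated_integral_mem[OF Ns.same_constants_subfield_axioms] x mn(2) k_Ns by blast
  then obtain c' l' M' where g_affine: "c' \<in> k" "l' \<in> N" "g = c' * s + l'" "(D ^^ M') c' = 0"
    using iterated_integral_affine_in_primitive[OF k N(1,2) x N(3,4) _ g] by blast
  have "algebraic_over k (c' * l - c * l')"
    using alg_dependent_affine_in_primitive[OF k.differential_subfield_axioms N(1-4)] dep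
      f_affine(1-3) g_affine(1-3) \<open>c \<noteq> 0\<close> by blast
  moreover have "c' * l - c * l' = c' * f - c * g"
    using f_affine(3) g_affine(3) by (simp add: algebra_simps)
  moreover have "iterated_integral D k (c' * f - c * g)"
    using k.iterated_integral_mult[OF x g_affine(4) mn(1)] k.iterated_integral_mult[OF x f_affine(4) mn(2)]
    by (rule k.iterated_integral_diff)
  ultimately have "c' * f - c * g \<in> k"
    using algebraic_iterated_integral_mem[OF k x] unfolding iterated_integral_def by auto
  then show ?thesis using f_affine(1) g_affine(1) \<open>c \<noteq> 0\<close> by blast
qed

end

theorem corollary32:
  fixes D :: "'a::field_char_0 \<Rightarrow> 'a" and k :: "'a set" and f g :: 'a
  assumes "derivation D"
    and "diff_subfield D k"
    and "constants D \<subseteq> k"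
    and "alg_closed_set (constants D)"
    and "\<exists>x\<in>k. D x = 1"
    and "iterated_integral D k f"
    and "iterated_integral D k g"
    and "alg_dependent k f g"
  shows "\<exists>u\<in>k. \<exists>v\<in>k. (u \<noteq> 0 \<or> v \<noteq> 0) \<and> u * f + v * g \<in> k"
proof -
  interpret k: same_constants_subfield D k
    using assms(1-3) by unfold_locales
  obtain x where x: "x \<in> k" "D x = 1" using assms(5) by blast
  show ?thesis
  proof (cases "f \<in> k")
    case True
    then show ?thesis using k.one_mem k.zero_mem by (intro bexI[of _ 1] bexI[of _ 0]) auto
  next
    case False
    then obtain c c' where "c \<in> k" "c' \<in> k" "c \<noteq> 0" "c' * f - c * g \<in> k"
      using k.dependent_iterated_integrals_linear_relation[OF k.same_constants_subfield_axioms x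
          assms(6) False assms(7,8)]
      by blast
    then show ?thesis by (intro bexI[of _ c'] bexI[of _ "- c"]) (auto intro: k.uminus_mem)
  qed
qed

end
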